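(* Let $n\ge2$ and $p^*=\binom{n}{\lfloor n/3\rfloor}\left(2^{\,n-\lfloor n/3\rfloor-1}-1\right)$. There is a set $\Sigma$ of $n\times n$ stochastic matrices such that: (i) there is a product $P$ of $p^*$ matrices from $\Sigma$ whose powers $P^k$ do not converge (as $k\to\infty$) to a rank one matrix; and (ii) for every product $P$ of at most $p^*-1$ matrices from $\Sigma$, the sequence of powers $P^k$ converges as $k\to\infty$ to a rank one matrix.
   Context: A matrix is stochastic if it is nonnegative and each row sums to one. *)

theory Defs
  imports "HOL-Analysis.Analysis"
begin

definition stochastic :: "real^'n^'n \<Rightarrow> bool" where
  "stochastic A \<longleftrightarrow> (\<forall>i j. 0 \<le> A $ i $ j) \<and> (\<forall>i. (\<Sum>j\<in>UNIV. A $ i $ j) = 1)"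

definition mat_prod_list :: "(real^'n^'n) list \<Rightarrow> real^'n^'n" where
  "mat_prod_list ms = foldr (\<lambda>A B. A ** B) ms (mat 1)"

definition mat_pow :: "real^'n^'n \<Rightarrow> nat \<Rightarrow> real^'n^'n" where
  "mat_pow P k = (((**) P) ^^ k) (mat 1)"

definition pow_conv_rank_one :: "real^'n^'n \<Rightarrow> bool" where
  "pow_conv_rank_one P \<longleftrightarrow> (\<exists>L. (\<lambda>k. mat_pow P k) \<longlonglongrightarrow> L \<and> rank L = 1)"

end

theory Submission
  imports Defs
begin

text \<open>Let \<open>d = n - n div 3\<close>; then \<open>p\<^sup>*\<close> is the number of unordered pairs \<open>{B, C}\<close> of
  disjoint nonempty sets with \<open>card (B \<union> C) = d\<close>. List them cyclically as \<open>(B i, C i)\<close> for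
  \<open>i < p\<^sup>*\<close> and let \<open>M i\<close> send the rows of \<open>B i\<close> uniformly onto \<open>B (i + 1)\<close>, the rows of
  \<open>C i\<close> onto \<open>C (i + 1)\<close>, and all other rows onto every state. The full cycle
  \<open>M 0 \<cdots> M (p\<^sup>* - 1)\<close> has \<open>B 0\<close> and \<open>C 0\<close> as disjoint closed classes, which rules out a
  rank one limit of its powers.

  Two states keep disjoint successor sets through a factor \<open>M i\<close> only if they lie in \<open>B i\<close>
  and \<open>C i\<close>; their successor sets are then \<open>B (i + 1)\<close> and \<open>C (i + 1)\<close>, and since all pairs
  cover the same number of states, the next factor must be \<open>M (i + 1)\<close>. So if two states stay
  separated through the square of a product of \<open>m < p\<^sup>*\<close> factors, the indices advance by one
  at each step, and the index after \<open>m\<close> steps is both \<open>i\<close> and \<open>i + m mod p\<^sup>*\<close>. Hence that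
  square is scrambling, and the powers of a matrix with a scrambling power converge to a rank
  one matrix because Dobrushin's coefficient contracts the oscillation of every column.\<close>

lemma stochastic_nonneg: "stochastic A \<Longrightarrow> 0 \<le> A $ i $ j"
  by (simp add: stochastic_def)

lemma stochastic_row_sum: "stochastic A \<Longrightarrow> (\<Sum>j\<in>UNIV. A $ i $ j) = 1"
  by (simp add: stochastic_def)

lemma stochastic_mat_1: "stochastic (mat 1 :: real^'n^'n)"
  by (simp add: stochastic_def mat_def)

lemma stochastic_mult:
  assumes "stochastic A" "stochastic B"
  shows "stochastic (A ** B)"
proof -
  have "(\<Sum>j\<in>UNIV. (A ** B) $ i $ j) = (\<Sum>j\<in>UNIV. \<Sum>l\<in>UNIV. A $ i $ l * B $ l $ j)" for i
    by (simp add: matrix_matrix_mult_def)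
  also have "\<dots> i = (\<Sum>l\<in>UNIV. A $ i $ l * (\<Sum>j\<in>UNIV. B $ l $ j))" for i
    by (subst sum.swap) (simp add: sum_distrib_left)
  finally have "(\<Sum>j\<in>UNIV. (A ** B) $ i $ j) = 1" for i
    using assms by (simp add: stochastic_def)
  moreover have "0 \<le> (A ** B) $ i $ j" for i j
    using assms by (auto simp: matrix_matrix_mult_def stochastic_def intro!: sum_nonneg)
  ultimately show ?thesis
    by (simp add: stochastic_def)
qed

lemma stochastic_limit:
  assumes "\<And>k. stochastic (X k)" and "X \<longlonglongrightarrow> L"
  shows "stochastic L"
proof -
  have entry: "(\<lambda>k. X k $ i $ j) \<longlonglongrightarrow> L $ i $ j" for i j
    using assms(2) by (intro tendsto_vec_nth)
  have "0 \<le> L $ i $ j" for i j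
    using entry by (rule LIMSEQ_le_const) (auto intro: stochastic_nonneg assms(1))
  moreover have "(\<Sum>j\<in>UNIV. L $ i $ j) = 1" for i
  proof -
    have "(\<lambda>k. \<Sum>j\<in>UNIV. X k $ i $ j) \<longlonglongrightarrow> (\<Sum>j\<in>UNIV. L $ i $ j)"
      using entry by (intro tendsto_sum)
    then have "(\<lambda>k. 1) \<longlonglongrightarrow> (\<Sum>j\<in>UNIV. L $ i $ j)"
      by (simp only: stochastic_row_sum[OF assms(1)])
    then show ?thesis
      by (simp add: LIMSEQ_const_iff)
  qed
  ultimately show ?thesis
    by (simp add: stochastic_def)
qed

lemma mat_prod_list_Nil: "mat_prod_list [] = mat 1"
  by (simp add: mat_prod_list_def)

lemma mat_prod_list_Cons: "mat_prod_list (A # ms) = A ** mat_prod_list ms"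
  by (simp add: mat_prod_list_def)

lemma mat_prod_list_append: "mat_prod_list (xs @ ys) = mat_prod_list xs ** mat_prod_list ys"
  by (induction xs) (simp_all add: mat_prod_list_Nil mat_prod_list_Cons matrix_mul_assoc)

lemma stochastic_mat_prod_list: "(\<And>A. A \<in> set ms \<Longrightarrow> stochastic A) \<Longrightarrow> stochastic (mat_prod_list ms)"
  by (induction ms) (simp_all add: mat_prod_list_Nil mat_prod_list_Cons stochastic_mat_1 stochastic_mult)

lemma mat_pow_0: "mat_pow P 0 = mat 1"
  by (simp add: mat_pow_def)

lemma mat_pow_Suc: "mat_pow P (Suc k) = P ** mat_pow P k"
  by (simp add: mat_pow_def)

lemma mat_pow_2_mat_prod_list: "mat_pow (mat_prod_list ms) 2 = mat_prod_list (ms @ ms)"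
  by (simp add: numeral_2_eq_2 mat_pow_Suc mat_pow_0 mat_prod_list_append)

lemma stochastic_mat_pow: "stochastic P \<Longrightarrow> stochastic (mat_pow P k)"
  by (induction k) (simp_all add: mat_pow_0 mat_pow_Suc stochastic_mat_1 stochastic_mult)

section \<open>Positivity patterns of products\<close>

lemma sum_pos_iff_ex_pos:
  fixes f :: "'a \<Rightarrow> 'b::ordered_comm_monoid_add"
  assumes "finite A" and "\<And>x. x \<in> A \<Longrightarrow> 0 \<le> f x"
  shows "0 < sum f A \<longleftrightarrow> (\<exists>x\<in>A. 0 < f x)"
  using assms sum_nonneg[of A f] sum_nonneg_eq_0_iff[OF assms] by (auto simp: order.strict_iff_order)

definition successors :: "real^'n^'n \<Rightarrow> 'n set \<Rightarrow> 'n set" where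
  "successors A S = {j. \<exists>i\<in>S. 0 < A $ i $ j}"

lemma successors_mono: "S \<subseteq> T \<Longrightarrow> successors A S \<subseteq> successors A T"
  by (auto simp: successors_def)

lemma successors_mat_1: "successors (mat 1) S = S"
  by (auto simp: successors_def mat_def)

lemma successors_nonempty:
  assumes "stochastic A" and "S \<noteq> {}"
  shows "successors A S \<noteq> {}"
proof -
  obtain i where "i \<in> S"
    using assms(2) by blast
  moreover have "\<exists>j. 0 < A $ i $ j"
  proof (rule ccontr)
    assume "\<nexists>j. 0 < A $ i $ j"
    then have "A $ i $ j = 0" for j
      using stochastic_nonneg[OF assms(1), of i j] by (meson antisym not_less)
    then show False
      using stochastic_row_sum[OF assms(1), of i] by simp
  qed
  ultimately show ?thesis
    by (auto simp: successors_def)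
qed

lemma successors_meet:
  assumes "stochastic A" and "S \<inter> T \<noteq> {}"
  shows "successors A S \<inter> successors A T \<noteq> {}"
proof -
  obtain z where "z \<in> S" "z \<in> T"
    using assms(2) by blast
  then have "successors A {z} \<subseteq> successors A S \<inter> successors A T"
    by (simp add: successors_mono)
  with successors_nonempty[OF assms(1)] show ?thesis
    by blast
qed

lemma fold_successors_meet:
  "(\<And>A. A \<in> set ms \<Longrightarrow> stochastic A) \<Longrightarrow> S \<inter> T \<noteq> {} \<Longrightarrow> fold successors ms S \<inter> fold successors ms T \<noteq> {}"
  by (induction ms arbitrary: S T) (simp_all add: successors_meet)

lemma successors_mult:
  assumes "stochastic A" "stochastic B"
  shows "successors (A ** B) S = successors B (successors A S)"
proof -
  have "0 < (A ** B) $ i $ j \<longleftrightarrow> (\<exists>l. 0 < A $ i $ l * B $ l $ j)" for i j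
    unfolding matrix_matrix_mult_def using assms
    by (simp add: sum_pos_iff_ex_pos stochastic_nonneg)
  also have "\<dots> i j \<longleftrightarrow> (\<exists>l. 0 < A $ i $ l \<and> 0 < B $ l $ j)" for i j
    using stochastic_nonneg[OF assms(1), of i] stochastic_nonneg[OF assms(2), of _ j]
    by (simp add: zero_less_mult_iff order.strict_iff_order)
  finally show ?thesis
    by (auto simp: successors_def)
qed

lemma successors_mat_prod_list:
  "(\<And>A. A \<in> set ms \<Longrightarrow> stochastic A) \<Longrightarrow> successors (mat_prod_list ms) S = fold successors ms S"
  by (induction ms arbitrary: S)
     (simp_all add: mat_prod_list_Nil mat_prod_list_Cons successors_mat_1 successors_mult
        stochastic_mat_prod_list)

lemma successors_mat_pow_subset:
  assumes "stochastic Q" and "successors Q S \<subseteq> S"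
  shows "successors (mat_pow Q k) S \<subseteq> S"
proof (induction k)
  case (Suc k)
  have "successors (mat_pow Q (Suc k)) S = successors (mat_pow Q k) (successors Q S)"
    by (simp add: mat_pow_Suc successors_mult assms(1) stochastic_mat_pow)
  also have "\<dots> \<subseteq> S"
    using Suc successors_mono[OF assms(2)] by blast
  finally show ?case .
qed (simp add: mat_pow_0 successors_mat_1)

lemma two_le_rank:
  fixes L :: "real^'n^'m"
  assumes "L $ b $ j \<noteq> 0" and "L $ c $ k \<noteq> 0" and "L $ b $ k = 0"
  shows "2 \<le> rank L"
proof -
  have "row c L \<notin> span {row b L}"
  proof
    assume "row c L \<in> span {row b L}"
    then obtain t where "row c L = t *\<^sub>R row b L"
      by (auto simp: span_singleton)
    then have "row c L $ k = t * row b L $ k"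
      by simp
    then show False
      using assms(2,3) by (simp add: row_def)
  qed
  moreover have "row b L \<noteq> 0"
  proof
    assume "row b L = 0"
    then have "row b L $ j = 0"
      by simp
    then show False
      using assms(1) by (simp add: row_def)
  qed
  ultimately have indep: "independent {row c L, row b L}"
    by (intro independent_insertI) (simp_all add: independent_empty)
  have "card {row c L, row b L} \<le> dim (rows L)"
    by (rule independent_card_le_dim[OF _ indep]) (auto simp: rows_def)
  moreover have "row c L \<noteq> row b L"
    using \<open>row c L \<notin> span _\<close> span_base by blast
  ultimately show ?thesis
    by (simp add: row_rank_def)
qed

lemma not_pow_conv_rank_one_of_closed_classes:
  assumes Q: "stochastic Q" and "b \<in> B" "c \<in> C" "B \<inter> C = {}"
    and "successors Q B \<subseteq> B" "successors Q C \<subseteq> C"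
  shows "\<not> pow_conv_rank_one Q"
proof
  assume "pow_conv_rank_one Q"
  then obtain L where lim: "(\<lambda>k. mat_pow Q k) \<longlonglongrightarrow> L" and "rank L = 1"
    unfolding pow_conv_rank_one_def by blast
  have L: "stochastic L"
    using stochastic_limit[OF stochastic_mat_pow[OF Q] lim] .
  have vanish: "L $ x $ j = 0" if "x \<in> D" "j \<notin> D" "successors Q D \<subseteq> D" for x j D
  proof -
    have "mat_pow Q k $ x $ j = 0" for k
    proof -
      have "\<not> 0 < mat_pow Q k $ x $ j"
        using successors_mat_pow_subset[OF Q that(3), of k] that(1,2)
        by (auto simp: successors_def)
      then show ?thesis
        using stochastic_nonneg[OF stochastic_mat_pow[OF Q], of k x j] by linarith
    qed
    then show ?thesis
      using LIMSEQ_unique[OF tendsto_vec_nth[OF tendsto_vec_nth[OF lim]]] by simp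
  qed
  have row_support: "\<exists>j\<in>D. L $ x $ j \<noteq> 0" if "x \<in> D" "successors Q D \<subseteq> D" for x D
  proof (rule ccontr)
    assume "\<not> ?thesis"
    then have "L $ x $ j = 0" for j
      using vanish[OF that(1) _ that(2)] by blast
    then show False
      using stochastic_row_sum[OF L, of x] by simp
  qed
  obtain j k where "j \<in> B" "L $ b $ j \<noteq> 0" "k \<in> C" "L $ c $ k \<noteq> 0"
    using row_support assms by meson
  moreover have "L $ b $ k = 0"
    using vanish assms \<open>k \<in> C\<close> by blast
  ultimately have "2 \<le> rank L"
    by (intro two_le_rank)
  with \<open>rank L = 1\<close> show False
    by simp
qed

section \<open>Scrambling powers force convergence to a rank one matrix\<close>

definition scrambling :: "real^'n^'n \<Rightarrow> bool" where
  "scrambling W \<longleftrightarrow> (\<forall>x y. \<exists>j. 0 < W $ x $ j \<and> 0 < W $ y $ j)"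

lemma stochastic_mult_vec_bounds:
  assumes W: "stochastic W" and "\<And>l. lo \<le> v $ l" "\<And>l. v $ l \<le> hi"
  shows "lo \<le> (W *v v) $ x" and "(W *v v) $ x \<le> hi"
proof -
  have "(\<Sum>l\<in>UNIV. W $ x $ l * lo) \<le> (\<Sum>l\<in>UNIV. W $ x $ l * v $ l)"
    using assms by (intro sum_mono mult_left_mono) (simp_all add: stochastic_nonneg)
  then show "lo \<le> (W *v v) $ x"
    using stochastic_row_sum[OF W, of x] by (simp add: matrix_vector_mult_def sum_distrib_right[symmetric])
  have "(\<Sum>l\<in>UNIV. W $ x $ l * v $ l) \<le> (\<Sum>l\<in>UNIV. W $ x $ l * hi)"
    using assms by (intro sum_mono mult_left_mono) (simp_all add: stochastic_nonneg)
  then show "(W *v v) $ x \<le> hi"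
    using stochastic_row_sum[OF W, of x] by (simp add: matrix_vector_mult_def sum_distrib_right[symmetric])
qed

text \<open>Dobrushin's contraction: the mass common to rows \<open>x\<close> and \<open>y\<close> cancels, and the
  remaining parts, each of total mass \<open>1 - overlap\<close>, average \<open>v\<close> into \<open>[lo, hi]\<close>.\<close>
lemma stochastic_mult_vec_diff_le:
  assumes W: "stochastic W" and lo: "\<And>l. lo \<le> v $ l" and hi: "\<And>l. v $ l \<le> hi"
  shows "(W *v v) $ x - (W *v v) $ y \<le> (1 - (\<Sum>l\<in>UNIV. min (W $ x $ l) (W $ y $ l))) * (hi - lo)"
proof -
  define m where "m l = min (W $ x $ l) (W $ y $ l)" for l
  define c where "c = (\<Sum>l\<in>UNIV. m l)"
  have rest_x: "(\<Sum>l\<in>UNIV. W $ x $ l - m l) = 1 - c"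
    using stochastic_row_sum[OF W, of x] by (simp add: c_def sum_subtractf)
  have rest_y: "(\<Sum>l\<in>UNIV. W $ y $ l - m l) = 1 - c"
    using stochastic_row_sum[OF W, of y] by (simp add: c_def sum_subtractf)
  have "(W *v v) $ x - (W *v v) $ y
      = (\<Sum>l\<in>UNIV. (W $ x $ l - m l) * v $ l) - (\<Sum>l\<in>UNIV. (W $ y $ l - m l) * v $ l)"
    by (simp add: matrix_vector_mult_def algebra_simps sum_subtractf)
  also have "\<dots> \<le> (\<Sum>l\<in>UNIV. (W $ x $ l - m l) * hi) - (\<Sum>l\<in>UNIV. (W $ y $ l - m l) * lo)"
    using lo hi by (intro diff_mono sum_mono mult_left_mono) (auto simp: m_def)
  also have "\<dots> = (1 - c) * hi - (1 - c) * lo"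
    by (simp only: sum_distrib_right[symmetric] rest_x rest_y)
  also have "\<dots> = (1 - c) * (hi - lo)"
    by (simp add: algebra_simps)
  finally show ?thesis
    by (simp add: c_def m_def)
qed

lemma scrambling_overlap_bound:
  assumes W: "stochastic W" and "scrambling W"
  obtains \<gamma> where "0 < \<gamma>" "\<gamma> \<le> 1" "\<And>x y. \<gamma> \<le> (\<Sum>l\<in>UNIV. min (W $ x $ l) (W $ y $ l))"
proof -
  define overlap where "overlap = (\<lambda>(x, y). \<Sum>l\<in>UNIV. min (W $ x $ l) (W $ y $ l))"
  have "0 < overlap (x, y)" for x y
  proof -
    obtain j where "0 < W $ x $ j" "0 < W $ y $ j"
      using \<open>scrambling W\<close> by (auto simp: scrambling_def)
    then show ?thesis
      unfolding overlap_def using stochastic_nonneg[OF W]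
      by (auto intro!: sum_pos2[of UNIV j])
  qed
  then have "0 < Min (range overlap)"
    by (subst Min_gr_iff) auto
  moreover have min_le: "Min (range overlap) \<le> overlap (x, y)" for x y
    by (rule Min_le) auto
  moreover have "overlap (x, x) = 1" for x
    using stochastic_row_sum[OF W] by (simp add: overlap_def)
  ultimately show ?thesis
    using min_le[of undefined undefined] by (intro that[of "Min (range overlap)"]) (auto simp: overlap_def)
qed

lemma decseq_incseq_common_limit:
  fixes hi lo :: "nat \<Rightarrow> real"
  assumes hi: "decseq hi" and lo: "incseq lo" and le: "\<And>k. lo k \<le> hi k"
    and \<gamma>: "0 < \<gamma>" "\<gamma> \<le> 1"
    and contract: "\<And>k. hi (N + k) - lo (N + k) \<le> (1 - \<gamma>) * (hi k - lo k)"
  shows "\<exists>c. hi \<longlonglongrightarrow> c \<and> lo \<longlonglongrightarrow> c"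
proof -
  have "\<forall>k. lo 0 \<le> hi k"
    using le incseqD[OF lo, of 0] by (meson order.trans zero_le)
  then obtain h where h: "hi \<longlonglongrightarrow> h"
    using decseq_convergent[OF hi] by blast
  have "\<forall>k. lo k \<le> hi 0"
    using le decseqD[OF hi, of 0] by (meson order.trans zero_le)
  then obtain l where l: "lo \<longlonglongrightarrow> l"
    using incseq_convergent[OF lo] by blast
  have osc: "hi (q * N) - lo (q * N) \<le> (1 - \<gamma>) ^ q * (hi 0 - lo 0)" for q
  proof (induction q)
    case (Suc q)
    have "hi (Suc q * N) - lo (Suc q * N) \<le> (1 - \<gamma>) * (hi (q * N) - lo (q * N))"
      using contract[of "q * N"] by (simp add: add.commute)
    also have "\<dots> \<le> (1 - \<gamma>) * ((1 - \<gamma>) ^ q * (hi 0 - lo 0))"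
      using Suc \<gamma> by (intro mult_left_mono) auto
    finally show ?case
      by simp
  qed simp
  have "h - l \<le> (1 - \<gamma>) ^ q * (hi 0 - lo 0)" for q
    using decseq_ge[OF hi h, of "q * N"] incseq_le[OF lo l, of "q * N"] osc[of q] by linarith
  moreover have "(\<lambda>q. (1 - \<gamma>) ^ q * (hi 0 - lo 0)) \<longlonglongrightarrow> 0"
    using \<gamma> by (intro tendsto_mult_left_zero LIMSEQ_power_zero) simp
  ultimately have "h - l \<le> 0"
    by (intro LIMSEQ_le[OF tendsto_const]) auto
  moreover have "l \<le> h"
    using le by (intro LIMSEQ_le[OF l h]) auto
  ultimately show ?thesis
    using h l by (intro exI[of _ h]) simp
qed

definition max_entry :: "real^'n \<Rightarrow> real" where
  "max_entry v = Max (range (\<lambda>x. v $ x))"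

definition min_entry :: "real^'n \<Rightarrow> real" where
  "min_entry v = Min (range (\<lambda>x. v $ x))"

lemma le_max_entry: "v $ x \<le> max_entry v" and min_entry_le: "min_entry v \<le> v $ x"
  by (simp_all add: max_entry_def min_entry_def)

lemma min_entry_le_max_entry: "min_entry v \<le> max_entry v"
  using min_entry_le le_max_entry by (rule order.trans)

lemma max_entry_attained: "\<exists>x. max_entry v = v $ x" and min_entry_attained: "\<exists>x. min_entry v = v $ x"
proof -
  have "max_entry v \<in> range (\<lambda>x. v $ x)" and "min_entry v \<in> range (\<lambda>x. v $ x)"
    unfolding max_entry_def min_entry_def by (simp_all add: Max_in Min_in)
  then show "\<exists>x. max_entry v = v $ x" and "\<exists>x. min_entry v = v $ x"
    by blast+
qed

lemma max_entry_stochastic_mult: "stochastic W \<Longrightarrow> max_entry (W *v v) \<le> max_entry v"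
  using max_entry_attained[of "W *v v"] stochastic_mult_vec_bounds(2)[OF _ min_entry_le le_max_entry]
  by metis

lemma min_entry_stochastic_mult: "stochastic W \<Longrightarrow> min_entry v \<le> min_entry (W *v v)"
  using min_entry_attained[of "W *v v"] stochastic_mult_vec_bounds(1)[OF _ min_entry_le le_max_entry]
  by metis

lemma oscillation_stochastic_mult:
  assumes W: "stochastic W" and \<gamma>: "\<And>x y. \<gamma> \<le> (\<Sum>l\<in>UNIV. min (W $ x $ l) (W $ y $ l))"
  shows "max_entry (W *v v) - min_entry (W *v v) \<le> (1 - \<gamma>) * (max_entry v - min_entry v)"
proof -
  obtain x y where "max_entry (W *v v) = (W *v v) $ x" and "min_entry (W *v v) = (W *v v) $ y"
    using max_entry_attained min_entry_attained by metis
  moreover have "(W *v v) $ x - (W *v v) $ y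
    \<le> (1 - (\<Sum>l\<in>UNIV. min (W $ x $ l) (W $ y $ l))) * (max_entry v - min_entry v)"
    by (rule stochastic_mult_vec_diff_le[OF W min_entry_le le_max_entry])
  moreover have "\<dots> \<le> (1 - \<gamma>) * (max_entry v - min_entry v)"
    using \<gamma>[of x y] min_entry_le_max_entry[of v] by (intro mult_right_mono) simp_all
  ultimately show ?thesis
    by linarith
qed

lemma consensus_of_scrambling_power:
  fixes u :: "nat \<Rightarrow> real^'n"
  assumes Q: "stochastic Q" and scr: "scrambling (mat_pow Q N)"
    and u: "\<And>k. u (Suc k) = Q *v u k"
  shows "\<exists>c. \<forall>x. (\<lambda>k. u k $ x) \<longlonglongrightarrow> c"
proof -
  define hi where "hi k = max_entry (u k)" for k
  define lo where "lo k = min_entry (u k)" for k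
  have le: "lo k \<le> hi k" for k
    by (simp add: hi_def lo_def min_entry_le_max_entry)
  have dec: "decseq hi" and inc: "incseq lo"
    by (simp_all add: decseq_SucI incseq_SucI hi_def lo_def u
        max_entry_stochastic_mult min_entry_stochastic_mult Q)
  obtain \<gamma> where \<gamma>_pos: "0 < \<gamma>" and \<gamma>_le_1: "\<gamma> \<le> 1"
    and \<gamma>: "\<And>x y. \<gamma> \<le> (\<Sum>l\<in>UNIV. min (mat_pow Q N $ x $ l) (mat_pow Q N $ y $ l))"
    using scrambling_overlap_bound[OF stochastic_mat_pow[OF Q] scr] by blast
  have contract: "hi (N + k) - lo (N + k) \<le> (1 - \<gamma>) * (hi k - lo k)" for k
  proof -
    have "u (N + k) = mat_pow Q N *v u k"
      by (induction N) (simp_all add: mat_pow_0 mat_pow_Suc u matrix_vector_mul_assoc[symmetric])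
    then show ?thesis
      unfolding hi_def lo_def using oscillation_stochastic_mult[OF stochastic_mat_pow[OF Q] \<gamma>] by simp
  qed
  obtain c where hi_lim: "hi \<longlonglongrightarrow> c" and lo_lim: "lo \<longlonglongrightarrow> c"
    using decseq_incseq_common_limit[OF dec inc le \<gamma>_pos \<gamma>_le_1 contract] by blast
  have "(\<lambda>k. u k $ x) \<longlonglongrightarrow> c" for x
    by (rule tendsto_sandwich[OF _ _ lo_lim hi_lim]) (simp_all add: hi_def lo_def le_max_entry min_entry_le)
  then show ?thesis
    by blast
qed

lemma column_mult: "column j (A ** B) = A *v column j B"
  by (simp add: column_def matrix_matrix_mult_def matrix_vector_mult_def)

lemma rank_const_rows:
  fixes r :: "real^'n"
  assumes "r \<noteq> 0"
  shows "rank ((\<chi> x. r) :: real^'n^'m) = 1"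
proof -
  have "rows ((\<chi> x. r) :: real^'n^'m) = {r}"
    by (auto simp: rows_def row_def vec_lambda_eta)
  then show ?thesis
    using assms by (simp add: row_rank_def)
qed

theorem pow_conv_rank_one_of_scrambling:
  fixes Q :: "real^'n^'n"
  assumes Q: "stochastic Q" and "scrambling (mat_pow Q N)"
  shows "pow_conv_rank_one Q"
proof -
  have "\<exists>c. \<forall>x. (\<lambda>k. mat_pow Q k $ x $ j) \<longlonglongrightarrow> c" for j
    using consensus_of_scrambling_power[OF assms, of "\<lambda>k. column j (mat_pow Q k)"]
    by (simp add: mat_pow_Suc column_mult) (simp add: column_def)
  then obtain c :: "'n \<Rightarrow> real" where c: "\<And>j x. (\<lambda>k. mat_pow Q k $ x $ j) \<longlonglongrightarrow> c j"
    by metis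
  define L :: "real^'n^'n" where "L = (\<chi> x. \<chi> j. c j)"
  have lim: "(\<lambda>k. mat_pow Q k) \<longlonglongrightarrow> L"
    unfolding L_def by (intro vec_tendstoI) (simp add: c vec_tendstoI)
  have "(\<chi> j. c j) \<noteq> 0"
  proof
    assume "(\<chi> j. c j) = 0"
    then have "L = 0"
      by (simp add: L_def vec_eq_iff)
    then show False
      using stochastic_limit[OF stochastic_mat_pow[OF Q] lim] by (simp add: stochastic_def)
  qed
  then have "rank L = 1"
    unfolding L_def by (rule rank_const_rows)
  with lim show ?thesis
    unfolding pow_conv_rank_one_def by blast
qed

section \<open>The cyclic family of matrices\<close>

locale cyclic_pairs =
  fixes p d :: nat and B C :: "nat \<Rightarrow> 'n::finite set"
  assumes p_pos: "0 < p"
    and disjoint: "\<And>i. i < p \<Longrightarrow> B i \<inter> C i = {}"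
    and B_nonempty: "\<And>i. i < p \<Longrightarrow> B i \<noteq> {}"
    and C_nonempty: "\<And>i. i < p \<Longrightarrow> C i \<noteq> {}"
    and card_Un: "\<And>i. i < p \<Longrightarrow> card (B i \<union> C i) = d"
    and pairs_distinct: "\<And>i j. i < p \<Longrightarrow> j < p \<Longrightarrow> {B i, C i} = {B j, C j} \<Longrightarrow> i = j"
begin

definition M :: "nat \<Rightarrow> real^'n^'n" where
  "M i = (\<chi> x j.
     if x \<in> B i then (if j \<in> B (Suc i mod p) then 1 / card (B (Suc i mod p)) else 0)
     else if x \<in> C i then (if j \<in> C (Suc i mod p) then 1 / card (C (Suc i mod p)) else 0)
     else 1 / CARD('n))"

lemma succ_index_less: "Suc i mod p < p"
  using p_pos by simp

lemma card_B_pos: "i < p \<Longrightarrow> 0 < card (B i)" and card_C_pos: "i < p \<Longrightarrow> 0 < card (C i)"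
  using B_nonempty C_nonempty by (simp_all add: card_gt_0_iff)

lemma stochastic_M: "stochastic (M i)"
proof -
  have row: "(\<Sum>j\<in>UNIV. if j \<in> S then 1 / real (card S) else 0) = 1" if "0 < card S" for S :: "'n set"
    using that by (simp add: sum.If_cases card_gt_0_iff)
  have "(\<Sum>j\<in>UNIV. M i $ x $ j) = 1" for x
    using row[OF card_B_pos[OF succ_index_less]] row[OF card_C_pos[OF succ_index_less]]
    by (cases "x \<in> B i"; cases "x \<in> C i") (simp_all add: M_def)
  then show ?thesis
    by (simp add: stochastic_def M_def)
qed

lemma stochastic_prod_M: "stochastic (mat_prod_list (map M ks))"
  by (rule stochastic_mat_prod_list) (auto simp: stochastic_M)

lemma successors_prod_M: "successors (mat_prod_list (map M ks)) S = fold successors (map M ks) S"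
  by (rule successors_mat_prod_list) (auto simp: stochastic_M)

lemma M_pos_iff:
  assumes "i < p"
  shows "0 < M i $ x $ j \<longleftrightarrow>
    x \<in> B i \<and> j \<in> B (Suc i mod p) \<or> x \<in> C i \<and> j \<in> C (Suc i mod p) \<or> x \<notin> B i \<union> C i"
  using disjoint[OF assms] card_B_pos[OF succ_index_less] card_C_pos[OF succ_index_less]
  by (auto simp: M_def)

lemma successors_M:
  assumes "i < p"
  shows "successors (M i) S =
    (if S \<inter> B i = {} then {} else B (Suc i mod p)) \<union> (if S \<inter> C i = {} then {} else C (Suc i mod p))
      \<union> (if S \<subseteq> B i \<union> C i then {} else UNIV)"
  using M_pos_iff[OF assms] by (auto simp: successors_def)

lemma successors_M_of_subset_B: "i < p \<Longrightarrow> X \<noteq> {} \<Longrightarrow> X \<subseteq> B i \<Longrightarrow> successors (M i) X = B (Suc i mod p)"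
  and successors_M_of_subset_C: "i < p \<Longrightarrow> X \<noteq> {} \<Longrightarrow> X \<subseteq> C i \<Longrightarrow> successors (M i) X = C (Suc i mod p)"
  using disjoint by (auto simp: successors_M)

text \<open>A point outside \<open>B i \<union> C i\<close> reaches every state, and a set meeting both \<open>B i\<close> and
  \<open>C i\<close> reaches the whole next pair, which contains the other successor set.\<close>
lemma separated_by_M:
  assumes i: "i < p" and "S \<noteq> {}" "T \<noteq> {}"
    and sep: "successors (M i) S \<inter> successors (M i) T = {}"
  shows "S \<subseteq> B i \<and> T \<subseteq> C i \<or> S \<subseteq> C i \<and> T \<subseteq> B i"
proof -
  have nonempty: "successors (M i) S \<noteq> {}" "successors (M i) T \<noteq> {}"
    using successors_nonempty[OF stochastic_M] assms(2,3) by auto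
  have inside: "X \<subseteq> B i \<union> C i" if "X = S \<or> X = T" for X
    using that sep nonempty by (auto simp: successors_M[OF i] split: if_splits)
  have reach_inside: "successors (M i) X \<subseteq> B (Suc i mod p) \<union> C (Suc i mod p)" if "X \<subseteq> B i \<union> C i" for X
    using that by (simp add: successors_M[OF i])
  have one_side: "X \<subseteq> B i \<or> X \<subseteq> C i"
    if "X \<subseteq> B i \<union> C i" "successors (M i) X \<inter> successors (M i) Y = {}"
      "successors (M i) Y \<noteq> {}" "Y \<subseteq> B i \<union> C i" for X Y
  proof (rule ccontr)
    assume "\<not> ?thesis"
    then have "successors (M i) X = B (Suc i mod p) \<union> C (Suc i mod p)"
      using that(1) by (auto simp: successors_M[OF i])
    then show False
      using that(2-4) reach_inside by blast
  qed
  have "S \<subseteq> B i \<or> S \<subseteq> C i" and "T \<subseteq> B i \<or> T \<subseteq> C i"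
    using one_side[of S T] one_side[of T S] inside sep nonempty by (auto simp: Int_commute)
  moreover have False if "S \<subseteq> B i" "T \<subseteq> B i"
    using successors_M_of_subset_B[OF i assms(2) that(1)] successors_M_of_subset_B[OF i assms(3) that(2)]
      sep B_nonempty[OF succ_index_less] by simp
  moreover have False if "S \<subseteq> C i" "T \<subseteq> C i"
    using successors_M_of_subset_C[OF i assms(2) that(1)] successors_M_of_subset_C[OF i assms(3) that(2)]
      sep C_nonempty[OF succ_index_less] by simp
  ultimately show ?thesis
    by blast
qed

lemma index_eq_of_subsets:
  assumes "i < p" "j < p" and "X \<subseteq> Y" "X' \<subseteq> Y'"
    and X: "{X, X'} = {B i, C i}" and Y: "{Y, Y'} = {B j, C j}"
  shows "i = j"
proof -
  have XY: "X \<union> X' = B i \<union> C i" "Y \<union> Y' = B j \<union> C j" "Y \<inter> Y' = {}"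
    using X Y disjoint[OF assms(2)] by (auto simp: doubleton_eq_iff)
  have "X \<union> X' = Y \<union> Y'"
    using assms(3,4) card_Un[OF assms(1)] card_Un[OF assms(2)] XY
    by (intro card_subset_eq) auto
  then have "X = Y" "X' = Y'"
    using assms(3,4) XY(3) by auto
  with X Y show ?thesis
    using pairs_distinct[OF assms(1,2)] by simp
qed

lemma next_index_of_separated:
  assumes i: "i < p" and j: "j < p" and "S \<noteq> {}" "T \<noteq> {}"
    and sep: "successors (M j) (successors (M i) S) \<inter> successors (M j) (successors (M i) T) = {}"
  shows "j = Suc i mod p"
proof -
  let ?S' = "successors (M i) S" and ?T' = "successors (M i) T"
  have "?S' \<inter> ?T' = {}"
    using successors_meet[OF stochastic_M] sep by blast
  then consider "S \<subseteq> B i" "T \<subseteq> C i" | "S \<subseteq> C i" "T \<subseteq> B i"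
    using separated_by_M[OF i assms(3,4)] by blast
  then have pair: "{?S', ?T'} = {B (Suc i mod p), C (Suc i mod p)}"
    by cases (simp_all add: successors_M_of_subset_B[OF i] successors_M_of_subset_C[OF i] assms(3,4)
        insert_commute)
  have "?S' \<noteq> {}" "?T' \<noteq> {}"
    using successors_nonempty[OF stochastic_M] assms(3,4) by auto
  then consider "?S' \<subseteq> B j" "?T' \<subseteq> C j" | "?S' \<subseteq> C j" "?T' \<subseteq> B j"
    using separated_by_M[OF j _ _ sep] by blast
  then show ?thesis
  proof cases
    case 1
    then show ?thesis
      using index_eq_of_subsets[OF succ_index_less j _ _ pair] by simp
  next
    case 2
    then show ?thesis
      using index_eq_of_subsets[OF succ_index_less j _ _ pair, of "C j" "B j"] by (simp add: insert_commute)
  qed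
qed

lemma cyclic_indices_of_separated:
  assumes "set ks \<subseteq> {..<p}" and "S \<noteq> {}" "T \<noteq> {}"
    and "fold successors (map M ks) S \<inter> fold successors (map M ks) T = {}"
    and "Suc t < length ks"
  shows "ks ! Suc t = Suc (ks ! t) mod p"
  using assms
proof (induction ks arbitrary: S T t)
  case (Cons i ks)
  have sep: "fold successors (map M ks) (successors (M i) S) \<inter> fold successors (map M ks) (successors (M i) T) = {}"
    using Cons.prems(4) by simp
  show ?case
  proof (cases t)
    case 0
    then obtain j js where ks_Cons: "ks = j # js"
      using Cons.prems(5) by (cases ks) auto
    then have "successors (M j) (successors (M i) S) \<inter> successors (M j) (successors (M i) T) = {}"
      using sep fold_successors_meet[of "map M js"] stochastic_M by auto
    then have "j = Suc i mod p"
      using next_index_of_separated Cons.prems(1-3) ks_Cons by simp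
    then show ?thesis
      using 0 ks_Cons by simp
  next
    case (Suc t')
    then show ?thesis
      using Cons.IH[OF _ _ _ sep] Cons.prems(1,5) successors_nonempty[OF stochastic_M] Cons.prems(2,3)
      by simp
  qed
qed simp

lemma index_progression_of_separated:
  assumes "set ks \<subseteq> {..<p}" and "S \<noteq> {}" "T \<noteq> {}"
    and "fold successors (map M ks) S \<inter> fold successors (map M ks) T = {}"
    and "t < length ks"
  shows "ks ! t = (ks ! 0 + t) mod p"
  using assms(5)
proof (induction t)
  case 0
  then have "ks ! 0 \<in> {..<p}"
    using assms(1) nth_mem by blast
  then show ?case
    by simp
next
  case (Suc t)
  then show ?case
    using cyclic_indices_of_separated[OF assms(1-4) Suc.prems] by (simp add: mod_Suc_eq)
qed

theorem scrambling_square_of_short_product: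
  assumes "set ks \<subseteq> {..<p}" and "ks \<noteq> []" and "length ks < p"
  shows "scrambling (mat_pow (mat_prod_list (map M ks)) 2)"
  unfolding scrambling_def
proof (intro allI)
  fix x y
  let ?P = "mat_pow (mat_prod_list (map M ks)) 2" and ?m = "length ks"
  have "ks ! 0 \<in> {..<p}"
    using assms(1,2) by (meson length_greater_0_conv nth_mem subsetD)
  then have first_less: "ks ! 0 < p"
    by simp
  have "fold successors (map M (ks @ ks)) {x} \<inter> fold successors (map M (ks @ ks)) {y} \<noteq> {}"
  proof
    assume sep: "fold successors (map M (ks @ ks)) {x} \<inter> fold successors (map M (ks @ ks)) {y} = {}"
    have "(ks @ ks) ! ?m = ((ks @ ks) ! 0 + ?m) mod p"
      by (rule index_progression_of_separated[OF _ _ _ sep]) (use assms(1,2) in auto)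
    then have "(ks ! 0 + ?m) mod p = ks ! 0 mod p"
      using assms(2) first_less by (simp add: nth_append)
    then have "p dvd ?m"
      using mod_eq_dvd_iff_nat[of "ks ! 0" "ks ! 0 + ?m" p] by simp
    then show False
      using assms(2,3) by (simp add: nat_dvd_not_less)
  qed
  then have "successors ?P {x} \<inter> successors ?P {y} \<noteq> {}"
    by (metis mat_pow_2_mat_prod_list map_append successors_prod_M)
  then show "\<exists>j. 0 < ?P $ x $ j \<and> 0 < ?P $ y $ j"
    by (auto simp: successors_def)
qed

theorem pow_conv_rank_one_of_short_product:
  assumes "set ms \<subseteq> M ` {..<p}" and "ms \<noteq> []" and "length ms < p"
  shows "pow_conv_rank_one (mat_prod_list ms)"
proof -
  have "ms \<in> map M ` lists {..<p}"
    using assms(1) by (auto simp flip: lists_image)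
  then obtain ks where "ms = map M ks" and "set ks \<subseteq> {..<p}"
    by auto
  with assms(2,3) show ?thesis
    using pow_conv_rank_one_of_scrambling[OF stochastic_prod_M scrambling_square_of_short_product]
    by simp
qed

lemma fold_successors_cycle:
  assumes "k \<le> p"
  shows "fold successors (map M [0..<k]) (B 0) = B (k mod p) \<and>
    fold successors (map M [0..<k]) (C 0) = C (k mod p)"
  using assms
proof (induction k)
  case (Suc k)
  then have k: "k < p"
    by simp
  have "fold successors (map M [0..<Suc k]) X = successors (M k) (fold successors (map M [0..<k]) X)" for X
    by simp
  then show ?case
    using Suc.IH k successors_M_of_subset_B[OF k B_nonempty[OF k] subset_refl]
      successors_M_of_subset_C[OF k C_nonempty[OF k] subset_refl]
    by simp
qed simp

theorem not_pow_conv_rank_one_full_cycle: "\<not> pow_conv_rank_one (mat_prod_list (map M [0..<p]))"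
proof -
  obtain b c where "b \<in> B 0" "c \<in> C 0"
    using B_nonempty[OF p_pos] C_nonempty[OF p_pos] by blast
  moreover have "successors (mat_prod_list (map M [0..<p])) (B 0) = B 0"
    and "successors (mat_prod_list (map M [0..<p])) (C 0) = C 0"
    using fold_successors_cycle[of p] by (simp_all add: successors_prod_M)
  ultimately show ?thesis
    using not_pow_conv_rank_one_of_closed_classes[OF stochastic_prod_M] disjoint[OF p_pos] by simp
qed

end

section \<open>Counting disjoint pairs\<close>

definition split_pairs :: "nat \<Rightarrow> ('n::finite set \<times> 'n set) set" where
  "split_pairs d = {(B, C). B \<inter> C = {} \<and> B \<noteq> {} \<and> C \<noteq> {} \<and> card (B \<union> C) = d}"

text \<open>\<open>(B, C) \<mapsto> (B \<union> C, B)\<close> identifies split pairs with \<open>d\<close>-sets carrying a nonempty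
  proper subset.\<close>
lemma card_split_pairs:
  assumes "1 \<le> d"
  shows "card (split_pairs d :: ('n::finite set \<times> 'n set) set) = (CARD('n) choose d) * (2 ^ d - 2)"
proof -
  define D where "D = Sigma {U :: 'n set. card U = d} (\<lambda>U. Pow U - {{}, U})"
  have "bij_betw (\<lambda>(B, C). (B \<union> C, B)) (split_pairs d) D"
    by (rule bij_betw_byWitness[where f' = "\<lambda>(U, B). (B, U - B)"])
       (auto simp: split_pairs_def D_def Un_absorb1)
  then have "card (split_pairs d :: ('n set \<times> 'n set) set) = card D"
    by (rule bij_betw_same_card)
  also have "\<dots> = (\<Sum>U\<in>{U :: 'n set. card U = d}. card (Pow U - {{}, U}))"
    unfolding D_def by (rule card_SigmaI) auto
  also have "\<dots> = (\<Sum>U\<in>{U :: 'n set. card U = d}. 2 ^ d - 2)"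
  proof (rule sum.cong)
    fix U :: "'n set"
    assume "U \<in> {U. card U = d}"
    then have "card U = d" and "U \<noteq> {}"
      using assms by auto
    then show "card (Pow U - {{}, U}) = 2 ^ d - 2"
      by (simp add: card_Diff_subset card_Pow)
  qed simp
  also have "\<dots> = (CARD('n) choose d) * (2 ^ d - 2)"
    using n_subsets[of "UNIV :: 'n set" d] by simp
  finally show ?thesis .
qed

lemma card_split_pairs_twice_unordered:
  "card (split_pairs d :: ('n::finite set \<times> 'n set) set)
    = 2 * card ((\<lambda>(B, C). {B, C}) ` (split_pairs d :: ('n set \<times> 'n set) set))"
proof -
  let ?G = "split_pairs d :: ('n set \<times> 'n set) set" and ?g = "\<lambda>(B, C). {B, C}"
  have fiber_card: "card {x \<in> ?G. ?g x = f} = 2" if f_in: "f \<in> ?g ` ?G" for f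
  proof -
    obtain B C where BC: "(B, C) \<in> ?G" and f: "f = {B, C}"
      using f_in by auto
    then have "(C, B) \<in> ?G" and "B \<noteq> C"
      by (auto simp: split_pairs_def Int_commute Un_commute)
    moreover have "{x \<in> ?G. ?g x = f} = {(B, C), (C, B)}"
      using BC \<open>(C, B) \<in> ?G\<close> unfolding f by (auto simp: doubleton_eq_iff)
    ultimately show ?thesis
      by simp
  qed
  have "card ?G = (\<Sum>f\<in>?g ` ?G. card {x \<in> ?G. ?g x = f})"
    by (simp add: card_eq_sum sum.image_gen[of ?G _ ?g] del: sum_constant)
  also have "\<dots> = (\<Sum>f\<in>?g ` ?G. 2)"
    by (rule sum.cong) (simp_all add: fiber_card)
  finally show ?thesis
    by simp
qed

lemma card_unordered_split_pairs:
  assumes "2 \<le> d"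
  shows "card ((\<lambda>(B, C). {B, C}) ` (split_pairs d :: ('n::finite set \<times> 'n set) set))
    = (CARD('n) choose d) * (2 ^ (d - 1) - 1)"
proof -
  have "(2::nat) ^ d - 2 = 2 * (2 ^ (d - 1) - 1)"
    using assms by (cases d) simp_all
  then show ?thesis
    using card_split_pairs[of d, where 'n = 'n] card_split_pairs_twice_unordered[of d, where 'n = 'n] assms
    by simp
qed

lemma cyclic_pairs_exists:
  assumes "2 \<le> d" and "d \<le> CARD('n::finite)"
  shows "\<exists>B C :: nat \<Rightarrow> 'n set. cyclic_pairs ((CARD('n) choose d) * (2 ^ (d - 1) - 1)) d B C"
proof -
  let ?G = "split_pairs d :: ('n set \<times> 'n set) set" and ?g = "\<lambda>(B, C). {B, C}"
  define p where "p = (CARD('n) choose d) * (2 ^ (d - 1) - 1)"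
  have "card (?g ` ?G) = p"
    unfolding p_def using assms(1) by (rule card_unordered_split_pairs)
  then obtain e where e: "bij_betw e {0..<p} (?g ` ?G)"
    using ex_bij_betw_nat_finite[of "?g ` ?G"] by auto
  have "\<forall>f\<in>?g ` ?G. \<exists>x. x \<in> ?G \<and> ?g x = f"
    by blast
  then obtain r where r: "\<forall>f\<in>?g ` ?G. r f \<in> ?G \<and> ?g (r f) = f"
    by (rule bchoice[elim_format]) blast
  define B where "B i = fst (r (e i))" for i
  define C where "C i = snd (r (e i))" for i
  have BC: "(B i, C i) \<in> ?G" and pair: "{B i, C i} = e i" if "i < p" for i
  proof -
    have "e i \<in> ?g ` ?G"
      using bij_betw_apply[OF e] that by simp
    then have "r (e i) \<in> ?G \<and> ?g (r (e i)) = e i"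
      by (rule bspec[OF r])
    then show "(B i, C i) \<in> ?G" and "{B i, C i} = e i"
      by (simp_all add: B_def C_def case_prod_beta)
  qed
  have "cyclic_pairs p d B C"
  proof
    have "(2::nat) ^ 1 \<le> 2 ^ (d - 1)"
      using assms(1) by (intro power_increasing) simp_all
    then show "0 < p"
      using assms(2) by (simp add: p_def)
  next
    fix i
    assume "i < p"
    with BC show "B i \<inter> C i = {}" "B i \<noteq> {}" "C i \<noteq> {}" "card (B i \<union> C i) = d"
      by (simp_all add: split_pairs_def)
  next
    fix i j
    assume "i < p" "j < p" "{B i, C i} = {B j, C j}"
    then show "i = j"
      using pair bij_betw_imp_inj_on[OF e] by (metis atLeastLessThan_iff inj_onD zero_le)
  qed
  then show ?thesis
    unfolding p_def by blast
qed

theorem theorem5: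
  fixes n :: nat and pstar :: nat
  assumes "n = CARD('n::finite)" and "n \<ge> 2"
    and "pstar = (n choose (n div 3)) * (2 ^ (n - n div 3 - 1) - 1)"
  shows "\<exists>\<Sigma> :: (real^'n^'n) set.
           (\<forall>A\<in>\<Sigma>. stochastic A) \<and>
           (\<exists>ms. length ms = pstar \<and> set ms \<subseteq> \<Sigma> \<and> \<not> pow_conv_rank_one (mat_prod_list ms)) \<and>
           (\<forall>ms. 1 \<le> length ms \<and> length ms \<le> pstar - 1 \<and> set ms \<subseteq> \<Sigma> \<longrightarrow>
                 pow_conv_rank_one (mat_prod_list ms))"
proof -
  define d where "d = n - n div 3"
  have "2 \<le> d" "d \<le> CARD('n)"
    using assms(1,2) by (simp_all add: d_def)
  moreover have "pstar = (CARD('n) choose d) * (2 ^ (d - 1) - 1)"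
    using assms binomial_symmetric[of "n div 3" n] by (simp add: d_def)
  ultimately obtain B C :: "nat \<Rightarrow> 'n set" where "cyclic_pairs pstar d B C"
    using cyclic_pairs_exists by metis
  then interpret cyclic_pairs pstar d B C .
  have "\<forall>A\<in>M ` {..<pstar}. stochastic A"
    by (simp add: stochastic_M)
  moreover have "length (map M [0..<pstar]) = pstar" and "set (map M [0..<pstar]) \<subseteq> M ` {..<pstar}"
    by auto
  moreover have "1 \<le> length ms \<and> length ms \<le> pstar - 1 \<and> set ms \<subseteq> M ` {..<pstar} \<longrightarrow>
      pow_conv_rank_one (mat_prod_list ms)" for ms
    using pow_conv_rank_one_of_short_product[of ms] p_pos by (cases ms) auto
  ultimately show ?thesis
    using not_pow_conv_rank_one_full_cycle by blast
qed

end
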